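(* Let $D$ be a finite digraph and $k$ a positive integer. The cop player has a winning strategy with $k$ cops in the lift-free cops-and-robber game on $D$ if and only if $\mathrm{ddp}(D) \le k$.
   Context: A reachable fragment of a digraph $D$ is a vertex set $R\subseteq V(D)$, maximal by inclusion, that contains a vertex $s$ (a source) from which every vertex of $R$ is reachable by a directed path in $D$; it is regarded as the induced subdigraph $D[R]$. The DAG-depth $\mathrm{ddp}(D)$ is defined recursively: $\mathrm{ddp}(D)=1$ if $|V(D)|=1$; if $D$ has exactly one reachable fragment and $|V(D)|>1$, then $\mathrm{ddp}(D)=1+\min_{v\in V(D)}\mathrm{ddp}(D-v)$; otherwise, if $R_1,\dots,R_p$ ($p\ge 2$) are the reachable fragments of $D$, $\mathrm{ddp}(D)=\max_{1\le i\le p}\mathrm{ddp}(D[R_i])$. Lift-free cops-and-robber game on a digraph $D$ with $k$ cops: the robber occupies a vertex, chosen at the start, and knows the cops' positions; the cop player knows the robber's position. In each turn the cop player announces a vertex on which a new cop will be placed; before the cop lands, the robber may move arbitrarily far along directed paths of $D$ (respecting edge directions) that avoid vertices already occupied by cops. Once placed, a cop never leaves its vertex. The robber is caught when a cop is placed on the robber's current vertex (equivalently, the robber stands on a vertex $v$ such that $v$ and all vertices of $N^+_D(v)$ are occupied by cops). The cop player wins if the robber is caught before the $k$ cops are used up; otherwise the robber wins. *)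

theory Defs
  imports Main
begin

definition reach :: "('a \<times> 'a) set \<Rightarrow> 'a set \<Rightarrow> 'a \<Rightarrow> 'a \<Rightarrow> bool" where
  "reach E S u v \<longleftrightarrow> u \<in> S \<and> (u, v) \<in> (E \<inter> (S \<times> S))\<^sup>*"

definition has_source :: "('a \<times> 'a) set \<Rightarrow> 'a set \<Rightarrow> 'a set \<Rightarrow> bool" where
  "has_source E S R \<longleftrightarrow> R \<subseteq> S \<and> (\<exists>s\<in>R. \<forall>v\<in>R. reach E S s v)"

definition frags :: "('a \<times> 'a) set \<Rightarrow> 'a set \<Rightarrow> 'a set set" where
  "frags E S = {R. has_source E S R \<and> (\<forall>R'. has_source E S R' \<and> R \<subseteq> R' \<longrightarrow> R' = R)}"

lemma frags_subset: "R \<in> frags E S \<Longrightarrow> R \<subseteq> S"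
  by (auto simp: frags_def has_source_def)

lemma frags_psubset:
  assumes "R \<in> frags E S" "card (frags E S) \<noteq> 1" "S \<noteq> {}"
  shows "R \<subset> S"
proof -
  have sub: "R \<subseteq> S" using assms(1) frags_subset by blast
  show ?thesis
  proof (rule ccontr)
    assume "\<not> R \<subset> S"
    hence RS: "R = S" using sub by blast
    have "frags E S = {S}"
    proof
      show "frags E S \<subseteq> {S}"
      proof
        fix R' assume R': "R' \<in> frags E S"
        have "has_source E S S" using assms(1) RS by (simp add: frags_def)
        moreover have "R' \<subseteq> S" using R' frags_subset by blast
        ultimately show "R' \<in> {S}" using R' by (auto simp: frags_def)
      qed
      show "{S} \<subseteq> frags E S" using assms(1) RS by simp
    qed
    thus False using assms(2) by simp
  qed
qed

function ddp :: "('a \<times> 'a) set \<Rightarrow> 'a set \<Rightarrow> nat" where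
  "ddp E S =
    (if infinite S \<or> S = {} then 0
     else if card S = 1 then 1
     else if card (frags E S) = 1 then 1 + Min ((\<lambda>v. ddp E (S - {v})) ` S)
     else Max ((\<lambda>R. ddp E R) ` frags E S))"
  by pat_completeness auto
termination
proof (relation "measure (\<lambda>(E, S). card S)")
  show "wf (measure (\<lambda>(E, S). card S))" by simp
next
  fix E :: "('a \<times> 'a) set" and S v
  assume "\<not> (infinite S \<or> S = {})" "v \<in> S"
  thus "((E, S - {v}), E, S) \<in> measure (\<lambda>(E, S). card S)"
    by (simp add: card_gt_0_iff)
next
  fix E :: "('a \<times> 'a) set" and S R
  assume a: "\<not> (infinite S \<or> S = {})" "card (frags E S) \<noteq> 1" "R \<in> frags E S"
  hence "R \<subset> S" using frags_psubset by blast
  thus "((E, R), E, S) \<in> measure (\<lambda>(E, S). card S)"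
    using a(1) by (simp add: psubset_card_mono)
qed

text \<open>State: set C of vertices occupied by cops,
  robber position r (not in C), n cops still available.
  cop_wins E V C r n: the cop player can force a capture using at most n further cops.
  In each turn the cop player announces v; then the robber moves along a directed
  path in D - C to some r'; then the cop lands on v; the robber is caught iff r' = v.\<close>
fun cop_wins :: "('a \<times> 'a) set \<Rightarrow> 'a set \<Rightarrow> 'a set \<Rightarrow> 'a \<Rightarrow> nat \<Rightarrow> bool" where
  "cop_wins E V C r 0 = False"
| "cop_wins E V C r (Suc n) =
     (\<exists>v\<in>V. \<forall>r'. reach E (V - C) r r' \<longrightarrow> r' = v \<or> cop_wins E V (C \<union> {v}) r' n)"

definition cops_win :: "('a \<times> 'a) set \<Rightarrow> 'a set \<Rightarrow> nat \<Rightarrow> bool" where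
  "cops_win E V k \<longleftrightarrow> (\<forall>r\<in>V. cop_wins E V {} r k)"

end

theory Submission
  imports Defs
begin

text \<open>A robber at r facing the cops on C can only ever reach the vertices of
  T = reach_set E (V - C) r, and the value of the game from there is ddp E T, by induction on
  the number of cops. Since T has the source r, ddp E T = 1 + min {ddp E (T - {v}) | v \<in> T}; a cop
  announced on v lets the robber pick any vertex of T - {v}, and the largest DAG-depth of a
  reachable set in T - {v} is exactly ddp E (T - {v}). For the same reason ddp E V is the
  largest DAG-depth of the reachable sets of single vertices, over which the robber chooses his
  starting position.\<close>

declare ddp.simps[simp del]

definition reach_set :: "('a \<times> 'a) set \<Rightarrow> 'a set \<Rightarrow> 'a \<Rightarrow> 'a set" where
  "reach_set E S x = {y. reach E S x y}"

lemma reach_in: "reach E S u v \<Longrightarrow> u \<in> S \<and> v \<in> S"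
  unfolding reach_def by (auto elim: rtranclE)

lemma reach_refl: "u \<in> S \<Longrightarrow> reach E S u u"
  unfolding reach_def by auto

lemma reach_mono: "S \<subseteq> S' \<Longrightarrow> reach E S u v \<Longrightarrow> reach E S' u v"
  unfolding reach_def using rtrancl_mono[of "E \<inter> S \<times> S" "E \<inter> S' \<times> S'"] by blast

lemma reach_step: "reach E S u v \<Longrightarrow> (v, w) \<in> E \<Longrightarrow> w \<in> S \<Longrightarrow> reach E S u w"
proof -
  assume "reach E S u v" "(v, w) \<in> E" "w \<in> S"
  moreover have "v \<in> S" using reach_in[OF \<open>reach E S u v\<close>] ..
  ultimately show ?thesis unfolding reach_def by (meson IntI SigmaI rtrancl.rtrancl_into_rtrancl)
qed

lemma reach_restrict_reach_set:
  assumes "reach E S r x" and "reach E (S - A) x y"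
  shows "reach E (reach_set E S r - A) x y"
proof -
  have "(x, y) \<in> (E \<inter> (S - A) \<times> (S - A))\<^sup>*" and "x \<in> S - A"
    using assms(2) reach_in unfolding reach_def by auto
  then show ?thesis
  proof (induction rule: rtrancl_induct)
    case base
    then show ?case using assms(1) by (auto simp: reach_set_def intro: reach_refl)
  next
    case (step y z)
    then have y: "reach E (reach_set E S r - A) x y" by blast
    then have "reach E S r y"
      using reach_in[OF y] by (simp add: reach_set_def)
    then have "z \<in> reach_set E S r - A"
      using step.hyps(2) reach_step[of E S r y z] by (auto simp: reach_set_def)
    with y step.hyps(2) show ?case by (blast intro: reach_step)
  qed
qed

lemma reach_set_subset: "reach_set E S x \<subseteq> S"
  by (auto simp: reach_set_def dest: reach_in)

lemma reach_set_self: "x \<in> S \<Longrightarrow> x \<in> reach_set E S x"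
  by (simp add: reach_set_def reach_refl)

lemma reach_set_mono: "S \<subseteq> S' \<Longrightarrow> reach_set E S x \<subseteq> reach_set E S' x"
  by (auto simp: reach_set_def intro: reach_mono)

lemma reach_set_Diff_reach_set:
  assumes "x \<in> reach_set E S r"
  shows "reach_set E (reach_set E S r - A) x = reach_set E (S - A) x"
proof
  show "reach_set E (S - A) x \<subseteq> reach_set E (reach_set E S r - A) x"
  proof
    fix y assume "y \<in> reach_set E (S - A) x"
    with assms show "y \<in> reach_set E (reach_set E S r - A) x"
      using reach_restrict_reach_set[of E S r x A y] by (simp add: reach_set_def)
  qed
  have "reach_set E S r - A \<subseteq> S - A"
    using reach_set_subset[of E S r] by blast
  then show "reach_set E (reach_set E S r - A) x \<subseteq> reach_set E (S - A) x"
    by (rule reach_set_mono)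
qed

lemma reach_set_idem: "r \<in> S \<Longrightarrow> reach_set E (reach_set E S r) r = reach_set E S r"
  using reach_set_Diff_reach_set[of r E S r "{}"] reach_set_self[of r S E] by simp

lemma has_source_reach_set: "x \<in> S \<Longrightarrow> has_source E S (reach_set E S x)"
  unfolding has_source_def using reach_set_subset reach_set_self
  by (fastforce simp: reach_set_def)

lemma frags_has_source: "R \<in> frags E S \<Longrightarrow> has_source E S R"
  by (simp add: frags_def)

lemma frags_maximal: "R \<in> frags E S \<Longrightarrow> has_source E S R' \<Longrightarrow> R \<subseteq> R' \<Longrightarrow> R' = R"
  by (simp add: frags_def)

lemma frags_intro:
  "has_source E S R \<Longrightarrow> (\<And>R'. has_source E S R' \<Longrightarrow> R \<subseteq> R' \<Longrightarrow> R' = R) \<Longrightarrow> R \<in> frags E S"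
  by (simp add: frags_def)

lemma frags_finite: "finite S \<Longrightarrow> finite (frags E S)"
  by (rule finite_subset[of _ "Pow S"]) (auto dest: frags_subset)

lemma reach_set_subset_frag:
  assumes "finite S" and "x \<in> S"
  obtains R where "R \<in> frags E S" and "reach_set E S x \<subseteq> R"
proof -
  let ?F = "{R. has_source E S R \<and> reach_set E S x \<subseteq> R}"
  have "?F \<subseteq> Pow S"
    by (auto simp: has_source_def)
  then have "finite ?F"
    using assms(1) by (simp add: finite_subset)
  moreover have "?F \<noteq> {}" using has_source_reach_set[OF assms(2)] by blast
  ultimately obtain R where R: "R \<in> ?F" and max: "\<And>R'. R' \<in> ?F \<Longrightarrow> R \<subseteq> R' \<Longrightarrow> R = R'"
    by (metis finite_has_maximal)
  have "R \<in> frags E S"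
  proof (rule frags_intro)
    show "has_source E S R" using R by blast
    fix R' assume "has_source E S R'" and "R \<subseteq> R'"
    with R max[of R'] show "R' = R" by blast
  qed
  with R show thesis using that by blast
qed

lemma frags_nonempty:
  assumes "finite S" and "S \<noteq> {}"
  shows "frags E S \<noteq> {}"
proof -
  obtain x where "x \<in> S" using assms(2) by blast
  then obtain R where "R \<in> frags E S" using reach_set_subset_frag[OF assms(1)] by metis
  then show ?thesis by blast
qed

lemma frag_eq_reach_set:
  assumes "R \<in> frags E S"
  obtains s where "s \<in> R" and "R = reach_set E S s"
proof -
  obtain s where s: "s \<in> R" "\<forall>v\<in>R. reach E S s v" "R \<subseteq> S"
    using frags_has_source[OF assms] unfolding has_source_def by blast
  then have "R \<subseteq> reach_set E S s" by (auto simp: reach_set_def)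
  moreover have "has_source E S (reach_set E S s)" using s by (intro has_source_reach_set) blast
  ultimately have "reach_set E S s = R" using frags_maximal[OF assms] by blast
  with s(1) show thesis using that by blast
qed

lemma frags_eq_singleton_if_source:
  assumes "s \<in> S" and "reach_set E S s = S"
  shows "frags E S = {S}"
proof -
  have "has_source E S S" using has_source_reach_set[OF assms(1), of E] assms(2) by simp
  then have "S \<in> frags E S"
    by (rule frags_intro) (simp add: has_source_def)
  moreover have "R = S" if "R \<in> frags E S" for R
    using frags_maximal[OF that \<open>has_source E S S\<close> frags_subset[OF that]] by simp
  ultimately show ?thesis by blast
qed

lemma source_if_card_frags_eq_1:
  assumes "finite S" and "card (frags E S) = 1"
  obtains s where "s \<in> S" and "reach_set E S s = S"
proof -
  obtain R where R: "frags E S = {R}" using card_1_singletonE[OF assms(2)] by blast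
  have "S \<subseteq> R"
  proof
    fix x assume "x \<in> S"
    then obtain R' where "R' \<in> frags E S" "reach_set E S x \<subseteq> R'"
      using reach_set_subset_frag[OF assms(1)] by blast
    with R reach_set_self[OF \<open>x \<in> S\<close>] show "x \<in> R" by blast
  qed
  moreover have "R \<subseteq> S" using R frags_subset[of R E S] by blast
  ultimately have "frags E S = {S}" using R by simp
  then obtain s where "s \<in> S" "S = reach_set E S s"
    using frag_eq_reach_set[of S E S] by blast
  then show thesis using that by simp
qed

lemma ddp_empty: "ddp E {} = 0"
  by (subst ddp.simps) simp

lemma ddp_singleton: "ddp E {x} = 1"
  by (subst ddp.simps) simp

lemma ddp_frags:
  assumes "finite S" and "S \<noteq> {}" and "card (frags E S) \<noteq> 1"
  shows "ddp E S = Max (ddp E ` frags E S)"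
proof -
  obtain x where "x \<in> S" using assms(2) by blast
  have "card S \<noteq> 1"
  proof
    assume "card S = 1"
    then have "S = {x}" using \<open>x \<in> S\<close> by (metis card_1_singletonE singletonD)
    then have "reach_set E S x = S"
      using reach_set_subset[of E S x] reach_set_self[OF \<open>x \<in> S\<close>, of E] by blast
    then show False
      using assms(3) frags_eq_singleton_if_source[OF \<open>x \<in> S\<close>] by simp
  qed
  with assms show ?thesis by (simp add: ddp.simps[of E S])
qed

text \<open>Also covers the single-vertex case of the recursion, as ddp E {} = 0.\<close>
lemma ddp_rooted:
  assumes "finite S" and "s \<in> S" and "reach_set E S s = S"
  shows "ddp E S = Suc (Min ((\<lambda>v. ddp E (S - {v})) ` S))"
proof (cases "card S = 1")
  case True
  then have "S = {s}" using assms(2) by (metis card_1_singletonE singletonD)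
  then show ?thesis by (simp add: ddp.simps[of E "{s}"] ddp_empty)
next
  case False
  moreover have "S \<noteq> {}" using assms(2) by blast
  ultimately show ?thesis
    using assms(1) frags_eq_singleton_if_source[OF assms(2,3)] by (simp add: ddp.simps[of E S])
qed

lemma ddp_le_if_reach_sets_le:
  assumes "finite S" and le: "\<And>x. x \<in> S \<Longrightarrow> ddp E (reach_set E S x) \<le> n"
  shows "ddp E S \<le> n"
proof (cases "S = {}")
  case True
  then show ?thesis by (simp add: ddp_empty)
next
  case S: False
  show ?thesis
  proof (cases "card (frags E S) = 1")
    case True
    then obtain s where "s \<in> S" "reach_set E S s = S"
      using source_if_card_frags_eq_1[OF assms(1)] by blast
    then show ?thesis using le by force
  next
    case False
    have "ddp E R \<le> n" if R: "R \<in> frags E S" for R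
    proof -
      obtain s where "s \<in> R" "R = reach_set E S s" using frag_eq_reach_set[OF R] by blast
      moreover have "s \<in> S" using calculation(1) frags_subset[OF R] by blast
      ultimately show ?thesis using le by simp
    qed
    then show ?thesis
      using ddp_frags[OF assms(1) S False] frags_finite[OF assms(1)] frags_nonempty[OF assms(1) S]
      by simp
  qed
qed

lemma ddp_rooted_subset_le:
  assumes "finite U" and "W \<subseteq> U" and "s \<in> W" and "reach_set E W s = W"
    and IH: "\<And>U' W'. U' \<subset> U \<Longrightarrow> W' \<subseteq> U' \<Longrightarrow> ddp E W' \<le> ddp E U'"
  shows "ddp E W \<le> ddp E U"
proof (cases "W = U")
  case False
  with assms(2) have WU: "W \<subset> U" by blast
  have "s \<in> U" and "U \<noteq> {}" using assms(2,3) by blast+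
  show ?thesis
  proof (cases "card (frags E U) = 1")
    case False
    obtain R where R: "R \<in> frags E U" "reach_set E U s \<subseteq> R"
      using reach_set_subset_frag[OF assms(1) \<open>s \<in> U\<close>] by blast
    have "W \<subseteq> R" using assms(4) reach_set_mono[of W U E s] WU R(2) by blast
    have "R \<subset> U" using frags_psubset[OF R(1) False \<open>U \<noteq> {}\<close>] .
    then have "ddp E W \<le> ddp E R" using IH \<open>W \<subseteq> R\<close> by blast
    also have "ddp E R \<le> ddp E U"
      using ddp_frags[OF assms(1) \<open>U \<noteq> {}\<close> False] R(1) frags_finite[OF assms(1), of E] by simp
    finally show ?thesis .
  next
    case True
    then obtain u where u: "u \<in> U" "reach_set E U u = U"
      using source_if_card_frags_eq_1[OF assms(1)] by blast
    obtain v where v: "v \<in> U" "ddp E U = Suc (ddp E (U - {v}))"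
      using ddp_rooted[OF assms(1) u] Min_in[of "(\<lambda>v. ddp E (U - {v})) ` U"] assms(1) u(1)
      by fastforce
    have "U - {v} \<subset> U" using v(1) by blast
    show ?thesis
    proof (cases "v \<in> W")
      case False
      then have "W \<subseteq> U - {v}" using assms(2) by blast
      then show ?thesis using IH[OF \<open>U - {v} \<subset> U\<close>] v(2) by (metis le_SucI)
    next
      case True
      have "finite W" using assms(1,2) finite_subset by blast
      then have "ddp E W \<le> Suc (ddp E (W - {v}))"
        using ddp_rooted[OF _ assms(3,4)] True by (simp del: Diff_iff)
      also have "\<dots> \<le> Suc (ddp E (U - {v}))"
        using IH[OF \<open>U - {v} \<subset> U\<close>, of "W - {v}"] assms(2) by (simp add: Diff_mono)
      finally show ?thesis using v(2) by simp
    qed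
  qed
qed simp

lemma ddp_mono:
  assumes "finite U" and "W \<subseteq> U"
  shows "ddp E W \<le> ddp E U"
  using assms
proof (induction U arbitrary: W rule: finite_psubset_induct)
  case (psubset U)
  have "finite W" using psubset.hyps(1) psubset.prems by (rule finite_subset[rotated])
  then show ?case
  proof (rule ddp_le_if_reach_sets_le)
    fix x assume "x \<in> W"
    then have "reach_set E (reach_set E W x) x = reach_set E W x" by (rule reach_set_idem)
    moreover have "reach_set E W x \<subseteq> U" using reach_set_subset[of E W x] psubset.prems by blast
    ultimately show "ddp E (reach_set E W x) \<le> ddp E U"
      using ddp_rooted_subset_le[OF psubset.hyps(1) _ reach_set_self[OF \<open>x \<in> W\<close>]] psubset.IH
      by presburger
  qed
qed

lemma ddp_le_iff_reach_sets:
  assumes "finite S"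
  shows "ddp E S \<le> n \<longleftrightarrow> (\<forall>x\<in>S. ddp E (reach_set E S x) \<le> n)"
  using ddp_mono[OF assms reach_set_subset, of E] ddp_le_if_reach_sets_le[OF assms, of E n]
  by (meson order_trans)

lemma ddp_le_Suc_iff_rooted:
  assumes "finite T" and "r \<in> T" and "reach_set E T r = T" and "T \<subseteq> V"
  shows "ddp E T \<le> Suc n \<longleftrightarrow> (\<exists>v\<in>V. ddp E (T - {v}) \<le> n)"
proof -
  have "T \<noteq> {}" using assms(2) by blast
  then have "ddp E T \<le> Suc n \<longleftrightarrow> (\<exists>v\<in>T. ddp E (T - {v}) \<le> n)"
    using ddp_rooted[OF assms(1-3)] assms(1) by (simp add: Min_le_iff)
  also have "\<dots> \<longleftrightarrow> (\<exists>v\<in>V. ddp E (T - {v}) \<le> n)"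
  proof
    assume "\<exists>v\<in>V. ddp E (T - {v}) \<le> n"
    then obtain v where v: "ddp E (T - {v}) \<le> n" by blast
    show "\<exists>v\<in>T. ddp E (T - {v}) \<le> n"
    proof (cases "v \<in> T")
      case False
      then have "ddp E (T - {r}) \<le> ddp E (T - {v})"
        using assms(1) ddp_mono[of T "T - {r}" E] by simp
      then show ?thesis using v assms(2) by (meson order_trans)
    qed (use v in blast)
  qed (use assms(4) in blast)
  finally show ?thesis .
qed

lemma cop_wins_iff_ddp_reach_set:
  assumes "finite V" and "r \<in> V - C"
  shows "cop_wins E V C r n \<longleftrightarrow> ddp E (reach_set E (V - C) r) \<le> n"
  using assms(2)
proof (induction n arbitrary: C r)
  case 0
  have "finite (reach_set E (V - C) r)"
    using assms(1) reach_set_subset[of E "V - C" r] finite_subset by blast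
  moreover have "{r} \<subseteq> reach_set E (V - C) r" using reach_set_self[OF "0.prems"] by blast
  ultimately have "ddp E {r} \<le> ddp E (reach_set E (V - C) r)" by (rule ddp_mono)
  then show ?case by (simp add: ddp_singleton)
next
  case (Suc n)
  define T where "T = reach_set E (V - C) r"
  have finT: "finite T" and TV: "T \<subseteq> V - C"
    using assms(1) reach_set_subset[of E "V - C" r] finite_subset unfolding T_def by blast+
  then have TV': "T \<subseteq> V" by blast
  have rT: "r \<in> T" using reach_set_self[OF Suc.prems] unfolding T_def .
  have rooted: "reach_set E T r = T" using reach_set_idem[of r "V - C" E] Suc.prems unfolding T_def by simp
  have cop_on_v: "(\<forall>r'. reach E (V - C) r r' \<longrightarrow> r' = v \<or> cop_wins E V (C \<union> {v}) r' n)
      \<longleftrightarrow> ddp E (T - {v}) \<le> n" for v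
  proof -
    have "cop_wins E V (C \<union> {v}) r' n \<longleftrightarrow> ddp E (reach_set E (T - {v}) r') \<le> n"
      if r': "r' \<in> T - {v}" for r'
    proof -
      have eq: "V - (C \<union> {v}) = V - C - {v}" by blast
      have "r' \<in> V - (C \<union> {v})" using r' TV by blast
      then have "cop_wins E V (C \<union> {v}) r' n \<longleftrightarrow> ddp E (reach_set E (V - C - {v}) r') \<le> n"
        using Suc.IH eq by simp
      moreover have "reach_set E (T - {v}) r' = reach_set E (V - C - {v}) r'"
        using reach_set_Diff_reach_set[of r' E "V - C" r "{v}"] r' unfolding T_def by blast
      ultimately show ?thesis by simp
    qed
    moreover have "reach E (V - C) r r' \<longleftrightarrow> r' \<in> T" for r'
      by (simp add: T_def reach_set_def)
    ultimately have "(\<forall>r'. reach E (V - C) r r' \<longrightarrow> r' = v \<or> cop_wins E V (C \<union> {v}) r' n)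
        \<longleftrightarrow> (\<forall>r'\<in>T - {v}. ddp E (reach_set E (T - {v}) r') \<le> n)"
      by blast
    also have "\<dots> \<longleftrightarrow> ddp E (T - {v}) \<le> n"
      using ddp_le_iff_reach_sets[of "T - {v}" E n] finT by simp
    finally show ?thesis .
  qed
  then show ?case
    using ddp_le_Suc_iff_rooted[OF finT rT rooted TV'] unfolding T_def by simp
qed

theorem theorem2p1:
  fixes V :: "'a set" and E :: "('a \<times> 'a) set" and k :: nat
  assumes "finite V" and "V \<noteq> {}" and "E \<subseteq> V \<times> V" and "k \<ge> 1"
  shows "cops_win E V k \<longleftrightarrow> ddp E V \<le> k"
proof - \<comment> \<open>only finiteness of V is needed\<close>
  have "cops_win E V k \<longleftrightarrow> (\<forall>r\<in>V. ddp E (reach_set E V r) \<le> k)"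
    using cop_wins_iff_ddp_reach_set[OF assms(1), of _ "{}" E k] by (simp add: cops_win_def)
  also have "\<dots> \<longleftrightarrow> ddp E V \<le> k"
    using ddp_le_iff_reach_sets[OF assms(1)] by simp
  finally show ?thesis .
qed

end
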